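(* Let $\mathfrak{d}\geq 3$ be an integer, $c>0$, $\lambda>0$, and let $p_{\mathbf{Y}_{\mathfrak{d}}}(\mathbf{y},t)$ denote the density of the absolutely continuous component of the law of the random flight $\mathbf{Y}_{\mathfrak{d}}(t)$ described in the context. Define, for $t>0$ and $\|\mathbf{y}\|<ct$, $$f(\mathbf{y},t)=\pi^{\mathfrak{d}/2}(ct)^{\mathfrak{d}-2}E_{\frac{\mathfrak{d}}{2}-1,\frac{\mathfrak{d}}{2},\frac{\mathfrak{d}}{2}-1,\frac{\mathfrak{d}-1}{2}}\!\left(\left(\tfrac{\lambda t}{2}\right)^{\mathfrak{d}-2}\right)p_{\mathbf{Y}_{\mathfrak{d}}}(\mathbf{y},t).$$ Then $$f(\mathbf{y},t)=\sum_{k=1}^{\infty}\left(\frac{\lambda}{2c}\right)^{k(\mathfrak{d}-2)}\frac{\left(\sqrt{c^2t^2-\|\mathbf{y}\|^2}\right)^{k(\mathfrak{d}-2)-2}}{\Gamma\!\left(k(\frac{\mathfrak{d}}{2}-1)\right)\Gamma\!\left(\frac{\mathfrak{d}-1}{2}+(\frac{\mathfrak{d}}{2}-1)k\right)},$$ and $u=f$ solves the higher order non-homogeneous Klein–Gordon equation $$\left(\frac{\partial^2}{\partial t^2}-c^2\Delta\right)^{\mathfrak{d}-2}u(\mathbf{y},t)=\lambda^{2(\mathfrak{d}-2)}u(\mathbf{y},t)+(2\lambda c)^{\mathfrak{d}-2}\frac{(c^2t^2-\|\mathbf{y}\|^2)^{-\mathfrak{d}/2}}{\sqrt{\pi}\,\Gamma(1-\frac{\mathfrak{d}}{2})},\qquad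 \Delta=\sum_{j=1}^{\mathfrak{d}}\frac{\partial^2}{\partial y_j^2},$$ in the region $\{(\mathbf{y},t):t>0,\ \|\mathbf{y}\|<ct\}$.
   Context: Random flight $\mathbf{Y}_{\mathfrak{d}}(t)$ in $\mathbb{R}^{\mathfrak{d}}$: a particle starts at the origin at time $0$ and moves with constant speed $c>0$; it changes direction $\mathcal{N}_{\mathfrak{d}}(t)$ times in $(0,t)$; successive directions are independent and uniform on $S^{\mathfrak{d}-1}$. Given $\mathcal{N}_{\mathfrak{d}}(t)=k$, the segment durations $\tau_1,\dots,\tau_{k+1}$ ($\tau_{k+1}=t-\sum_{j=1}^k\tau_j$) have joint density $\frac{\Gamma((k+1)(\frac{\mathfrak{d}}{2}-1))}{\Gamma(\frac{\mathfrak{d}}{2}-1)^{k+1}}\frac{1}{t^{(k+1)(\frac{\mathfrak{d}}{2}-1)-1}}\prod_{j=1}^{k+1}\tau_j^{\frac{\mathfrak{d}}{2}-2}$ (Dirichlet with parameters $(\frac{\mathfrak{d}}{2}-1,\dots,\frac{\mathfrak{d}}{2}-1)$ rescaled to total $t$), independent of the directions. The number of changes has law $P\{\mathcal{N}_{\mathfrak{d}}(t)=k\}=\frac{1}{E_{\mathfrak{d}-2,\mathfrak{d}-1}((\lambda t)^{\mathfrak{d}-2})}\frac{(\lambda t)^{k(\mathfrak{d}-2)}}{\Gamma((\mathfrak{d}-2)k+\mathfrak{d}-1)}$, $k=0,1,\dots$, with $E_{\alpha,\beta}(x)=\sum_{k\ge0}x^k/\Gamma(\alpha k+\beta)$. It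 is known that for $k\geq1$ the conditional density of $\mathbf{Y}_{\mathfrak{d}}(t)$ given $\mathcal{N}_{\mathfrak{d}}(t)=k$ is $p(\mathbf{y},t;k)=\frac{\Gamma((k+1)(\frac{\mathfrak{d}}{2}-1)+1)}{\Gamma(k(\frac{\mathfrak{d}}{2}-1))}\frac{(c^2t^2-\|\mathbf{y}\|^2)^{k(\frac{\mathfrak{d}}{2}-1)-1}}{\pi^{\mathfrak{d}/2}(ct)^{2(k+1)(\frac{\mathfrak{d}}{2}-1)}}$ on $\|\mathbf{y}\|<ct$, and $p_{\mathbf{Y}_{\mathfrak{d}}}(\mathbf{y},t)=\sum_{k\geq1}p(\mathbf{y},t;k)P\{\mathcal{N}_{\mathfrak{d}}(t)=k\}$. The multi-index Mittag-Leffler function is $E_{\frac{\mathfrak{d}}{2}-1,\frac{\mathfrak{d}}{2},\frac{\mathfrak{d}}{2}-1,\frac{\mathfrak{d}-1}{2}}(z)=\sum_{k=0}^\infty\frac{z^k}{\Gamma((k+1)(\frac{\mathfrak{d}}{2}-1)+1)\Gamma(\frac{\mathfrak{d}-1}{2}+(\frac{\mathfrak{d}}{2}-1)k)}$. Convention: $1/\Gamma(-n)=0$ for nonnegative integers $n$, so the inhomogeneous term vanishes for even $\mathfrak{d}$. *)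

theory Defs
  imports "HOL-Analysis.Analysis"
begin

definition ML2 :: "real \<Rightarrow> real \<Rightarrow> real \<Rightarrow> real" where
  "ML2 \<alpha> \<beta> x = (\<Sum>k. x ^ k / Gamma (\<alpha> * real k + \<beta>))"

definition ML4 :: "real \<Rightarrow> real \<Rightarrow> real \<Rightarrow> real \<Rightarrow> real \<Rightarrow> real" where
  "ML4 \<alpha>1 \<beta>1 \<alpha>2 \<beta>2 x =
     (\<Sum>k. x ^ k / (Gamma (\<alpha>1 * real k + \<beta>1) * Gamma (\<alpha>2 * real k + \<beta>2)))"

text \<open>Law of the number of direction changes: P{N_d(t) = k}.\<close>
definition PN :: "nat \<Rightarrow> real \<Rightarrow> real \<Rightarrow> nat \<Rightarrow> real" where
  "PN d lam t k =
     (1 / ML2 (real d - 2) (real d - 1) ((lam * t) ^ (d - 2))) *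
     ((lam * t) ^ (k * (d - 2)) / Gamma ((real d - 2) * real k + real d - 1))"

text \<open>Conditional density of Y_d(t) given N_d(t) = k (k >= 1), at a point y
  of Euclidean norm r (zero outside the ball of radius c t).\<close>
definition pcond :: "nat \<Rightarrow> real \<Rightarrow> real \<Rightarrow> real \<Rightarrow> nat \<Rightarrow> real" where
  "pcond d c r t k =
     (if r < c * t then
        Gamma ((real k + 1) * (real d / 2 - 1) + 1) / Gamma (real k * (real d / 2 - 1)) *
        ((c\<^sup>2 * t\<^sup>2 - r\<^sup>2) powr (real k * (real d / 2 - 1) - 1) /
         (pi powr (real d / 2) * (c * t) powr (2 * (real k + 1) * (real d / 2 - 1))))
      else 0)"

text \<open>Density of the absolutely continuous component of the law of Y_d(t),
  for y in R^d with d = CARD('n):  sum_{k>=1} p(y,t;k) P{N_d(t)=k}.\<close>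
definition pY :: "real \<Rightarrow> real \<Rightarrow> real ^ 'n \<Rightarrow> real \<Rightarrow> real" where
  "pY c lam y t =
     (\<Sum>k. pcond CARD('n) c (norm y) t (Suc k) * PN CARD('n) lam t (Suc k))"

definition fY :: "real \<Rightarrow> real \<Rightarrow> real ^ 'n \<Rightarrow> real \<Rightarrow> real" where
  "fY c lam y t =
     (let d = real CARD('n) in
       pi powr (d / 2) * (c * t) powr (d - 2) *
       ML4 (d / 2 - 1) (d / 2) (d / 2 - 1) ((d - 1) / 2) ((lam * t / 2) powr (d - 2)) *
       pY c lam y t)"

text \<open>Directions: None = time variable t, Some j = space coordinate y_j.\<close>
definition shifted :: "(real ^ 'n \<Rightarrow> real \<Rightarrow> real) \<Rightarrow> 'n option \<Rightarrow> real ^ 'n \<Rightarrow> real \<Rightarrow> real \<Rightarrow> real" where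
  "shifted g dir y t s =
     (case dir of None \<Rightarrow> g y (t + s) | Some j \<Rightarrow> g (y + s *\<^sub>R axis j 1) t)"

definition partial :: "'n option \<Rightarrow> (real ^ 'n \<Rightarrow> real \<Rightarrow> real) \<Rightarrow> real ^ 'n \<Rightarrow> real \<Rightarrow> real" where
  "partial dir g y t = deriv (shifted g dir y t) 0"

definition iter_partial :: "'n option list \<Rightarrow> (real ^ 'n \<Rightarrow> real \<Rightarrow> real) \<Rightarrow> real ^ 'n \<Rightarrow> real \<Rightarrow> real" where
  "iter_partial ds g = foldr partial ds g"

definition all_partials_exist :: "((real ^ 'n) \<times> real) set \<Rightarrow> (real ^ 'n \<Rightarrow> real \<Rightarrow> real) \<Rightarrow> bool" where
  "all_partials_exist S g \<longleftrightarrow>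
     (\<forall>ds dir y t. (y, t) \<in> S \<longrightarrow> shifted (iter_partial ds g) dir y t differentiable (at 0))"

definition KG :: "real \<Rightarrow> (real ^ 'n \<Rightarrow> real \<Rightarrow> real) \<Rightarrow> real ^ 'n \<Rightarrow> real \<Rightarrow> real" where
  "KG c g y t = partial None (partial None g) y t
                - c\<^sup>2 * (\<Sum>j\<in>UNIV. partial (Some j) (partial (Some j) g) y t)"

end

theory Submission
  imports Defs
begin

text \<open>Write \<open>N = d - 2\<close>, \<open>n = N/2\<close> and \<open>W = c\<^sup>2t\<^sup>2 - \<parallel>y\<parallel>\<^sup>2\<close>. Combining the conditional densities with
  the law of the number of direction changes via Legendre's duplication formula, \<open>f\<close> becomes
  the generalised power series \<open>\<Sum>\<^sub>k a\<^sub>k W\<^bsup>n k + n - 1\<^esup>\<close> with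
  \<open>a\<^sub>k = (\<lambda>/2c)\<^bsup>N(k+1)\<^esup> / (\<Gamma>((k+1)n) \<Gamma>((k+1)n + n + 1/2))\<close>, an entire series in \<open>W\<^sup>n\<close>.
  On functions of \<open>W\<close> the Klein-Gordon operator acts as \<open>4c\<^sup>2 W h'' + 2c\<^sup>2(d+1) h'\<close>, hence sends
  \<open>W\<^sup>e\<close> to \<open>4c\<^sup>2 e (e + n + 1/2) W\<^bsup>e-1\<^esup>\<close>; by the functional equation of \<open>\<Gamma>\<close> this lowers both
  Gamma arguments in \<open>a\<^sub>k\<close> by one. After \<open>N\<close> applications the term \<open>k + 2\<close> reproduces
  \<open>\<lambda>\<^bsup>2N\<^esup>\<close> times the term \<open>k\<close> of \<open>f\<close>, the term \<open>k = 1\<close> vanishes because \<open>1/\<Gamma>(0) = 0\<close>, and the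
  term \<open>k = 0\<close> is the inhomogeneity.\<close>

lemma Gamma_legendre_duplication_real:
  fixes m :: real
  assumes "m \<ge> 0"
  shows "Gamma (m + 1/2) * Gamma (m + 1) = 2 powr (- 2 * m) * sqrt pi * Gamma (2 * m + 1)"
proof -
  define z where "z = complex_of_real (m + 1/2)"
  have z1: "z \<notin> \<int>\<^sub>\<le>\<^sub>0" unfolding z_def using assms
    by (subst of_real_in_nonpos_Ints_iff) (auto dest!: nonpos_Ints_nonpos)
  have zz: "z + 1/2 = complex_of_real (m + 1)" unfolding z_def by simp
  have z2: "z + 1/2 \<notin> \<int>\<^sub>\<le>\<^sub>0" unfolding zz using assms
    by (subst of_real_in_nonpos_Ints_iff) (auto dest!: nonpos_Ints_nonpos)
  have e1: "2 * z = complex_of_real (2 * m + 1)" unfolding z_def by (simp add: algebra_simps)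
  have e2: "exp ((1 - 2 * z) * of_real (ln 2)) = complex_of_real (2 powr (- 2 * m))"
    unfolding z_def by (simp add: algebra_simps powr_def flip: exp_of_real)
  have "Gamma (complex_of_real (m + 1/2)) * Gamma (complex_of_real (m + 1)) =
      complex_of_real (2 powr (- 2 * m)) * of_real (sqrt pi) * Gamma (complex_of_real (2 * m + 1))"
    using Gamma_legendre_duplication[OF z1 z2, unfolded e2, unfolded e1 zz] by (simp only: z_def)
  then have "complex_of_real (Gamma (m + 1/2) * Gamma (m + 1)) =
      complex_of_real (2 powr (- 2 * m) * sqrt pi * Gamma (2 * m + 1))"
    by (simp only: Gamma_complex_of_real of_real_mult[symmetric])
  then show ?thesis using of_real_eq_iff by blast
qed

lemma powr_neg_two_mult_nat:
  "(2::real) powr (- 2 * m) = inverse (2 ^ N)" if "2 * m = real N"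
  using that by (simp add: powr_minus powr_realpow)

section \<open>Generalised power series\<close>

definition entire_coeffs :: "(nat \<Rightarrow> real) \<Rightarrow> bool" where
  "entire_coeffs a \<longleftrightarrow> (\<forall>z. summable (\<lambda>k. a k * z ^ k))"

text \<open>\<open>powr_series n a b w\<close> is \<open>\<Sum>\<^sub>k a\<^sub>k w\<^bsup>n k + b\<^esup>\<close>, meaningful for \<open>w > 0\<close>.\<close>
definition powr_series :: "real \<Rightarrow> (nat \<Rightarrow> real) \<Rightarrow> real \<Rightarrow> real \<Rightarrow> real" where
  "powr_series n a b w = w powr b * (\<Sum>k. a k * (w powr n) ^ k)"

definition deriv_coeffs :: "real \<Rightarrow> real \<Rightarrow> (nat \<Rightarrow> real) \<Rightarrow> nat \<Rightarrow> real" where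
  "deriv_coeffs n b a k = (real k * n + b) * a k"

lemma entire_coeffs_sums: "entire_coeffs a \<Longrightarrow> (\<lambda>k. a k * z ^ k) sums (\<Sum>k. a k * z ^ k)"
  unfolding entire_coeffs_def by (intro summable_sums) auto

lemma sums_of_nat_times_coeffs:
  assumes "entire_coeffs a"
  shows "(\<lambda>k. real k * a k * z ^ k) sums (z * (\<Sum>k. diffs a k * z ^ k))"
proof -
  have "summable (\<lambda>k. diffs a k * z ^ k)"
    using assms unfolding entire_coeffs_def by (intro termdiff_converges_all) auto
  then have "(\<lambda>k. z * (diffs a k * z ^ k)) sums (z * (\<Sum>k. diffs a k * z ^ k))"
    by (intro sums_mult summable_sums)
  moreover have "(\<lambda>k. z * (diffs a k * z ^ k)) = (\<lambda>k. real (Suc k) * a (Suc k) * z ^ Suc k)"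
    by (auto simp: diffs_def fun_eq_iff algebra_simps)
  ultimately have "(\<lambda>k. real (Suc k) * a (Suc k) * z ^ Suc k) sums (z * (\<Sum>k. diffs a k * z ^ k))"
    by simp
  then show ?thesis by (subst (asm) sums_Suc_iff) simp
qed

lemma entire_deriv_coeffs:
  assumes "entire_coeffs a"
  shows "entire_coeffs (deriv_coeffs n b a)"
  unfolding entire_coeffs_def
proof
  fix z
  have "summable (\<lambda>k. n * (real k * a k * z ^ k) + b * (a k * z ^ k))"
    using sums_of_nat_times_coeffs[OF assms] assms unfolding entire_coeffs_def
    by (intro summable_add summable_mult) (auto simp: sums_iff)
  then show "summable (\<lambda>k. deriv_coeffs n b a k * z ^ k)"
    by (simp add: deriv_coeffs_def algebra_simps)
qed

lemma entire_coeffs_cmult: "entire_coeffs a \<Longrightarrow> entire_coeffs (\<lambda>k. C * a k)"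
  unfolding entire_coeffs_def by (auto simp: mult.assoc intro: summable_mult)

lemma powr_series_has_real_derivative:
  assumes a: "entire_coeffs a" and w: "w > 0"
  shows "(powr_series n a b has_real_derivative powr_series n (deriv_coeffs n b a) (b - 1) w) (at w)"
proof -
  define P where "P = (\<lambda>z::real. \<Sum>k. a k * z ^ k)"
  define P' where "P' = (\<lambda>z::real. \<Sum>k. diffs a k * z ^ k)"
  define z where "z = w powr n"
  have dP: "(P has_real_derivative P' x) (at x)" for x
    unfolding P_def P'_def using a unfolding entire_coeffs_def
    by (intro termdiffs_strong_converges_everywhere) auto
  have "((\<lambda>x. x powr b * P (x powr n)) has_real_derivative
      b * w powr (b - 1) * P z + w powr b * (P' z * (n * w powr (n - 1)))) (at w)"
    unfolding z_def using w
    by (auto intro!: derivative_eq_intros DERIV_chain2[OF dP] simp: algebra_simps)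
  moreover have "(\<lambda>x. x powr b * P (x powr n)) = powr_series n a b"
    by (simp add: powr_series_def P_def fun_eq_iff)
  moreover have "(\<lambda>k. n * (real k * a k * z ^ k) + b * (a k * z ^ k)) sums (n * (z * P' z) + b * P z)"
    unfolding P_def P'_def
    by (intro sums_add sums_mult sums_of_nat_times_coeffs entire_coeffs_sums a)
  then have "powr_series n (deriv_coeffs n b a) (b - 1) w = w powr (b - 1) * (n * (z * P' z) + b * P z)"
    by (simp add: powr_series_def z_def sums_iff deriv_coeffs_def algebra_simps)
  moreover have "b * w powr (b - 1) * P z + w powr b * (P' z * (n * w powr (n - 1))) =
      w powr (b - 1) * (n * (z * P' z) + b * P z)"
    using w by (simp add: z_def powr_diff field_simps)
  ultimately show ?thesis by simp
qed

lemma powr_series_linear: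
  assumes "entire_coeffs a1" "entire_coeffs a2"
  shows "\<alpha> * powr_series n a1 b w + \<beta> * powr_series n a2 b w =
    powr_series n (\<lambda>k. \<alpha> * a1 k + \<beta> * a2 k) b w"
proof -
  have "(\<lambda>k. \<alpha> * (a1 k * z ^ k) + \<beta> * (a2 k * z ^ k)) sums
      (\<alpha> * (\<Sum>k. a1 k * z ^ k) + \<beta> * (\<Sum>k. a2 k * z ^ k))" for z
    by (intro sums_add sums_mult entire_coeffs_sums assms)
  then show ?thesis
    by (simp add: powr_series_def sums_iff algebra_simps)
qed

lemma powr_series_times_base:
  "w > 0 \<Longrightarrow> w * powr_series n a b w = powr_series n a (b + 1) w"
  by (simp add: powr_series_def powr_add)


section \<open>Smoothness in space-time\<close>

fun has_derivs :: "nat \<Rightarrow> real set \<Rightarrow> (real \<Rightarrow> real) \<Rightarrow> bool" where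
  "has_derivs 0 U h = True"
| "has_derivs (Suc m) U h = (\<exists>h'. (\<forall>x\<in>U. (h has_real_derivative h' x) (at x)) \<and> has_derivs m U h')"

lemma has_derivs_powr_series: "entire_coeffs a \<Longrightarrow> has_derivs m {0<..} (powr_series n a b)"
proof (induction m arbitrary: a b)
  case (Suc m)
  then show ?case
    by (auto intro!: exI[of _ "powr_series n (deriv_coeffs n b a) (b - 1)"]
        powr_series_has_real_derivative entire_deriv_coeffs)
qed simp

fun has_partials :: "nat \<Rightarrow> ((real ^ 'n) \<times> real) set \<Rightarrow> (real ^ 'n \<Rightarrow> real \<Rightarrow> real) \<Rightarrow> bool" where
  "has_partials 0 S g = True"
| "has_partials (Suc m) S g = (\<forall>dir. \<exists>g'. (\<forall>y t. (y, t) \<in> S \<longrightarrow>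
        (shifted g dir y t has_real_derivative g' y t) (at 0)) \<and> has_partials m S g')"

definition shift_point :: "'n option \<Rightarrow> real ^ 'n \<Rightarrow> real \<Rightarrow> real \<Rightarrow> (real ^ 'n) \<times> real" where
  "shift_point dir y t s = (case dir of None \<Rightarrow> (y, t + s) | Some j \<Rightarrow> (y + s *\<^sub>R axis j 1, t))"

lemma shifted_eq_shift_point: "shifted g dir y t = (\<lambda>s. case_prod g (shift_point dir y t s))"
  by (cases dir) (auto simp: shifted_def shift_point_def)

lemma shift_point_0 [simp]: "shift_point dir y t 0 = (y, t)"
  by (cases dir) (auto simp: shift_point_def)

lemma dist_shift_point: "dist (shift_point dir y t s) (y, t) = \<bar>s\<bar>"
  by (cases dir) (auto simp: shift_point_def dist_Pair_Pair dist_norm)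

lemma shifted_has_real_derivative_cong:
  assumes "open S" "(y, t) \<in> S" "\<And>y t. (y, t) \<in> S \<Longrightarrow> f y t = g y t"
    and "(shifted f dir y t has_real_derivative D) (at 0)"
  shows "(shifted g dir y t has_real_derivative D) (at 0)"
proof -
  obtain e where e: "e > 0" "ball (y, t) e \<subseteq> S" using assms(1,2) openE by blast
  have "shift_point dir y t s \<in> S" if "\<bar>s\<bar> < e" for s
    using e(2) that dist_shift_point[of dir y t s] by (auto simp: dist_commute)
  then have "shifted f dir y t s = shifted g dir y t s" if "\<bar>s\<bar> < e" for s
    using that assms(3)[of "fst (shift_point dir y t s)" "snd (shift_point dir y t s)"]
    by (simp add: shifted_eq_shift_point case_prod_beta)
  then show ?thesis
    using has_field_derivative_transform_within[of "shifted f dir y t" D 0 UNIV e] assms(4) e(1)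
    by auto
qed

lemma partial_eqI:
  assumes "open S" "(y, t) \<in> S" "\<And>y t. (y, t) \<in> S \<Longrightarrow> v y t = u y t"
    and "(shifted v dir y t has_real_derivative D) (at 0)"
  shows "partial dir u y t = D"
  unfolding partial_def by (rule DERIV_imp_deriv, rule shifted_has_real_derivative_cong[OF assms])

lemma has_partialsE:
  assumes "has_partials (Suc m) S g"
  obtains g' where "\<forall>y t. (y, t) \<in> S \<longrightarrow> (shifted g dir y t has_real_derivative g' y t) (at 0)"
    "has_partials m S g'"
  using assms by (metis has_partials.simps(2))

lemma has_partials_Suc_imp: "has_partials (Suc m) S g \<Longrightarrow> has_partials m S g"
proof (induction m arbitrary: g)
  case (Suc m)
  show ?case unfolding has_partials.simps
  proof
    fix dir
    obtain g' where "\<forall>y t. (y, t) \<in> S \<longrightarrow> (shifted g dir y t has_real_derivative g' y t) (at 0)"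
      "has_partials (Suc m) S g'" using Suc.prems by (rule has_partialsE)
    with Suc.IH show "\<exists>g'. (\<forall>y t. (y, t) \<in> S \<longrightarrow> (shifted g dir y t has_real_derivative g' y t) (at 0))
        \<and> has_partials m S g'" by blast
  qed
qed simp

lemma has_partials_const: "has_partials m S (\<lambda>y t. k)"
proof (induction m arbitrary: k)
  case (Suc m)
  show ?case unfolding has_partials.simps
    by (auto intro!: exI[of _ "\<lambda>y t. 0"] Suc simp: shifted_eq_shift_point)
qed simp

lemma has_partials_add:
  "has_partials m S f \<Longrightarrow> has_partials m S g \<Longrightarrow> has_partials m S (\<lambda>y t. f y t + g y t)"
proof (induction m arbitrary: f g)
  case (Suc m)
  show ?case unfolding has_partials.simps
  proof
    fix dir
    obtain f' where f': "\<forall>y t. (y, t) \<in> S \<longrightarrow> (shifted f dir y t has_real_derivative f' y t) (at 0)"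
      "has_partials m S f'" using Suc.prems(1) by (rule has_partialsE)
    obtain g' where g': "\<forall>y t. (y, t) \<in> S \<longrightarrow> (shifted g dir y t has_real_derivative g' y t) (at 0)"
      "has_partials m S g'" using Suc.prems(2) by (rule has_partialsE)
    have "(shifted (\<lambda>y t. f y t + g y t) dir y t has_real_derivative f' y t + g' y t) (at 0)"
      if "(y, t) \<in> S" for y t
      using DERIV_add[OF f'(1)[rule_format, OF that] g'(1)[rule_format, OF that]] by (simp add: shifted_eq_shift_point case_prod_beta)
    with Suc.IH[OF f'(2) g'(2)]
    show "\<exists>h. (\<forall>y t. (y, t) \<in> S \<longrightarrow> (shifted (\<lambda>y t. f y t + g y t) dir y t has_real_derivative h y t) (at 0))
        \<and> has_partials m S h" by (intro exI[of _ "\<lambda>y t. f' y t + g' y t"]) blast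
  qed
qed simp

lemma has_partials_mult:
  "has_partials m S f \<Longrightarrow> has_partials m S g \<Longrightarrow> has_partials m S (\<lambda>y t. f y t * g y t)"
proof (induction m arbitrary: f g)
  case (Suc m)
  show ?case unfolding has_partials.simps
  proof
    fix dir
    obtain f' where f': "\<forall>y t. (y, t) \<in> S \<longrightarrow> (shifted f dir y t has_real_derivative f' y t) (at 0)"
      "has_partials m S f'" using Suc.prems(1) by (rule has_partialsE)
    obtain g' where g': "\<forall>y t. (y, t) \<in> S \<longrightarrow> (shifted g dir y t has_real_derivative g' y t) (at 0)"
      "has_partials m S g'" using Suc.prems(2) by (rule has_partialsE)
    have "(shifted (\<lambda>y t. f y t * g y t) dir y t has_real_derivative f' y t * g y t + g' y t * f y t) (at 0)"
      if "(y, t) \<in> S" for y t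
      using DERIV_mult[OF f'(1)[rule_format, OF that] g'(1)[rule_format, OF that]] by (simp add: shifted_eq_shift_point case_prod_beta)
    moreover have "has_partials m S (\<lambda>y t. f' y t * g y t + g' y t * f y t)"
      using Suc.IH f'(2) g'(2) has_partials_Suc_imp Suc.prems by (intro has_partials_add) blast+
    ultimately show "\<exists>h. (\<forall>y t. (y, t) \<in> S \<longrightarrow> (shifted (\<lambda>y t. f y t * g y t) dir y t has_real_derivative h y t) (at 0))
        \<and> has_partials m S h" by (intro exI[of _ "\<lambda>y t. f' y t * g y t + g' y t * f y t"]) blast
  qed
qed simp

lemma has_partials_sum:
  "finite I \<Longrightarrow> (\<And>i. i \<in> I \<Longrightarrow> has_partials m S (f i)) \<Longrightarrow> has_partials m S (\<lambda>y t. \<Sum>i\<in>I. f i y t)"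
  by (induction I rule: finite_induct) (auto intro: has_partials_const has_partials_add)

lemma has_partials_comp:
  "has_derivs m U h \<Longrightarrow> has_partials m S g \<Longrightarrow> (\<And>y t. (y, t) \<in> S \<Longrightarrow> g y t \<in> U) \<Longrightarrow>
    has_partials m S (\<lambda>y t. h (g y t))"
proof (induction m arbitrary: h g)
  case (Suc m)
  obtain h' where h': "\<forall>x\<in>U. (h has_real_derivative h' x) (at x)" "has_derivs m U h'"
    using Suc.prems(1) by auto
  show ?case unfolding has_partials.simps
  proof
    fix dir
    obtain g' where g': "\<forall>y t. (y, t) \<in> S \<longrightarrow> (shifted g dir y t has_real_derivative g' y t) (at 0)"
      "has_partials m S g'" using Suc.prems(2) by (rule has_partialsE)
    have "(shifted (\<lambda>y t. h (g y t)) dir y t has_real_derivative h' (g y t) * g' y t) (at 0)"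
      if "(y, t) \<in> S" for y t
    proof -
      have "(h has_real_derivative h' (shifted g dir y t 0)) (at (shifted g dir y t 0))"
        using h'(1) Suc.prems(3)[OF that] by (simp add: shifted_eq_shift_point)
      from DERIV_chain2[OF this g'(1)[rule_format, OF that]] show ?thesis
        by (simp add: shifted_eq_shift_point case_prod_beta)
    qed
    moreover have "has_partials m S (\<lambda>y t. h' (g y t) * g' y t)"
      using Suc has_partials_Suc_imp h'(2) g'(2) by (intro has_partials_mult) blast+
    ultimately show "\<exists>k. (\<forall>y t. (y, t) \<in> S \<longrightarrow> (shifted (\<lambda>y t. h (g y t)) dir y t has_real_derivative k y t) (at 0))
        \<and> has_partials m S k" by (intro exI[of _ "\<lambda>y t. h' (g y t) * g' y t"]) blast
  qed
qed simp

lemma has_partials_cong: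
  assumes "open S" "\<And>y t. (y, t) \<in> S \<Longrightarrow> f y t = g y t" "has_partials m S f"
  shows "has_partials m S g"
proof (cases m)
  case (Suc k)
  show ?thesis unfolding Suc has_partials.simps
  proof
    fix dir
    obtain f' where "\<forall>y t. (y, t) \<in> S \<longrightarrow> (shifted f dir y t has_real_derivative f' y t) (at 0)"
      "has_partials k S f'" using assms(3) unfolding Suc by (rule has_partialsE)
    moreover have "(shifted g dir y t has_real_derivative f' y t) (at 0)" if "(y, t) \<in> S" for y t
      by (rule shifted_has_real_derivative_cong[OF assms(1) that, where f = f])
        (use assms(2) calculation(1) that in auto)
    ultimately show "\<exists>g'. (\<forall>y t. (y, t) \<in> S \<longrightarrow> (shifted g dir y t has_real_derivative g' y t) (at 0))
        \<and> has_partials k S g'" by blast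
  qed
qed simp

lemma has_real_derivative_shifted_time:
  "(shifted (\<lambda>y t. t) dir y t has_real_derivative (case dir of None \<Rightarrow> 1 | Some j \<Rightarrow> 0)) (at 0)"
  by (cases dir) (auto simp: shifted_eq_shift_point shift_point_def intro!: derivative_eq_intros)

lemma has_real_derivative_shifted_coord:
  "(shifted (\<lambda>y t. y $ i) dir y t has_real_derivative (case dir of None \<Rightarrow> 0 | Some j \<Rightarrow> axis j 1 $ i)) (at 0)"
  by (cases dir) (auto simp: shifted_eq_shift_point shift_point_def intro!: derivative_eq_intros)

lemma has_partials_time: "has_partials m S (\<lambda>y t. t)"
  by (cases m) (auto intro!: exI has_real_derivative_shifted_time has_partials_const)

lemma has_partials_coord: "has_partials m S (\<lambda>y t. y $ i)"
  by (cases m) (auto intro!: exI has_real_derivative_shifted_coord has_partials_const)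

lemma iter_partial_eq_has_partials:
  assumes "open S" "has_partials (length ds + m) S g"
  shows "\<exists>g'. has_partials m S g' \<and> (\<forall>y t. (y, t) \<in> S \<longrightarrow> iter_partial ds g y t = g' y t)"
  using assms(2)
proof (induction ds arbitrary: m)
  case Nil
  then show ?case by (auto simp: iter_partial_def)
next
  case (Cons d ds)
  obtain g1 where g1: "has_partials (Suc m) S g1" "\<forall>y t. (y, t) \<in> S \<longrightarrow> iter_partial ds g y t = g1 y t"
    using Cons.IH[of "Suc m"] Cons.prems by auto
  obtain g2 where g2: "\<forall>y t. (y, t) \<in> S \<longrightarrow> (shifted g1 d y t has_real_derivative g2 y t) (at 0)"
    "has_partials m S g2" using g1(1) by (rule has_partialsE)
  have "iter_partial (d # ds) g y t = g2 y t" if "(y, t) \<in> S" for y t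
    using partial_eqI[OF assms(1) that _ g2(1)[rule_format, OF that], of "iter_partial ds g"] g1(2)
    by (simp add: iter_partial_def)
  with g2(2) show ?case by blast
qed

lemma all_partials_exist_if_has_partials:
  assumes "open S" "\<And>m. has_partials m S g"
  shows "all_partials_exist S g"
  unfolding all_partials_exist_def
proof (intro allI impI)
  fix ds dir y t assume yt: "(y, t) \<in> S"
  obtain g' where g': "has_partials (Suc 0) S g'" "\<forall>y t. (y, t) \<in> S \<longrightarrow> iter_partial ds g y t = g' y t"
    using iter_partial_eq_has_partials[OF assms(1) assms(2)] by blast
  obtain g2 where "\<forall>y t. (y, t) \<in> S \<longrightarrow> (shifted g' dir y t has_real_derivative g2 y t) (at 0)"
    using g'(1) by (rule has_partialsE)
  then have "(shifted (iter_partial ds g) dir y t has_real_derivative g2 y t) (at 0)"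
    using shifted_has_real_derivative_cong[OF assms(1) yt, of g'] g'(2) yt by simp
  then show "shifted (iter_partial ds g) dir y t differentiable at 0"
    unfolding real_differentiable_def by blast
qed


section \<open>The Klein-Gordon operator on functions of \<open>c\<^sup>2t\<^sup>2 - \<parallel>y\<parallel>\<^sup>2\<close>\<close>

definition cone_form :: "real \<Rightarrow> real ^ 'n \<Rightarrow> real \<Rightarrow> real" where
  "cone_form c y t = c\<^sup>2 * t\<^sup>2 - (norm y)\<^sup>2"

definition light_cone :: "real \<Rightarrow> ((real ^ 'n) \<times> real) set" where
  "light_cone c = {(y, t). t > 0 \<and> norm y < c * t}"

lemma open_light_cone: "open (light_cone c)"
proof -
  have "light_cone c = {p. 0 < snd p} \<inter> {p. norm (fst p) < c * snd p}"
    by (auto simp: light_cone_def)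
  also have "open \<dots>"
    by (intro open_Int open_Collect_less continuous_intros)
  finally show ?thesis .
qed

lemma cone_form_pos: "(y, t) \<in> light_cone c \<Longrightarrow> c > 0 \<Longrightarrow> cone_form c y t > 0"
  by (auto simp: light_cone_def cone_form_def power_mult_distrib[symmetric]
      intro!: power_strict_mono)

lemma norm_sq_eq_sum: "(norm (y :: real ^ 'n))\<^sup>2 = (\<Sum>i\<in>UNIV. y $ i * y $ i)"
  by (simp add: power2_norm_eq_inner inner_vec_def)

lemma has_partials_cone_form: "has_partials m S (cone_form c :: real ^ 'n \<Rightarrow> real \<Rightarrow> real)"
proof -
  have eq: "cone_form c = (\<lambda>(y :: real ^ 'n) t. c\<^sup>2 * (t * t) + (-1) * (\<Sum>i\<in>UNIV. y $ i * y $ i))"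
    by (intro ext) (unfold cone_form_def norm_sq_eq_sum, simp add: power2_eq_square)
  show ?thesis unfolding eq
    by (intro has_partials_add has_partials_mult has_partials_const has_partials_time
        has_partials_sum has_partials_coord) auto
qed

lemma has_real_derivative_shifted_cone_form:
  "(shifted (cone_form c) dir y t has_real_derivative
    (case dir of None \<Rightarrow> 2 * c\<^sup>2 * t | Some j \<Rightarrow> - 2 * y $ j)) (at 0)"
proof (cases dir)
  case None
  have "shifted (cone_form c) dir y t = (\<lambda>s. c\<^sup>2 * (t + s)\<^sup>2 - (norm y)\<^sup>2)"
    by (rule ext) (simp add: None shifted_def cone_form_def)
  then show ?thesis using None by (auto intro!: derivative_eq_intros)
next
  case (Some j)
  have norm_shift: "(norm (y + s *\<^sub>R axis j 1))\<^sup>2 = (norm y)\<^sup>2 + 2 * s * (y $ j) + s\<^sup>2" for s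
    unfolding power2_norm_eq_inner
    by (simp add: inner_add_left inner_add_right inner_axis inner_axis' power2_eq_square
        algebra_simps inner_commute)
  have "shifted (cone_form c) dir y t = (\<lambda>s. c\<^sup>2 * t\<^sup>2 - ((norm y)\<^sup>2 + 2 * s * (y $ j) + s\<^sup>2))"
    by (rule ext) (simp add: Some shifted_def cone_form_def norm_shift)
  then show ?thesis using Some by (auto intro!: derivative_eq_intros)
qed

lemma has_real_derivative_shifted_comp_cone_form:
  assumes "(h has_real_derivative h' (cone_form c y t)) (at (cone_form c y t))"
  shows "(shifted (\<lambda>y t. h (cone_form c y t)) dir y t has_real_derivative
    h' (cone_form c y t) * (case dir of None \<Rightarrow> 2 * c\<^sup>2 * t | Some j \<Rightarrow> - 2 * y $ j)) (at 0)"
  using DERIV_chain2[OF _ has_real_derivative_shifted_cone_form, of h] assms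
  by (simp add: shifted_eq_shift_point case_prod_beta)

lemma has_real_derivative_shifted_mult:
  assumes "(shifted f dir y t has_real_derivative D1) (at 0)" "(shifted g dir y t has_real_derivative D2) (at 0)"
  shows "(shifted (\<lambda>y t. f y t * g y t) dir y t has_real_derivative D1 * g y t + D2 * f y t) (at 0)"
  using DERIV_mult[OF assms] by (simp add: shifted_eq_shift_point case_prod_beta)

text \<open>The chain rule gives \<open>\<partial>\<^sub>t\<^sup>2 h(W) = 2c\<^sup>2 h'(W) + 4c\<^sup>4t\<^sup>2 h''(W)\<close> and
  \<open>\<partial>\<^sub>j\<^sup>2 h(W) = -2 h'(W) + 4 y\<^sub>j\<^sup>2 h''(W)\<close>.\<close>
lemma KG_comp_cone_form:
  fixes u :: "real ^ 'n \<Rightarrow> real \<Rightarrow> real"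
  assumes c: "c > 0"
    and h: "\<And>x. x > 0 \<Longrightarrow> (h has_real_derivative h1 x) (at x)"
    and h1: "\<And>x. x > 0 \<Longrightarrow> (h1 has_real_derivative h2 x) (at x)"
    and u: "\<And>y t. (y, t) \<in> light_cone c \<Longrightarrow> u y t = h (cone_form c y t)"
    and yt: "(y, t) \<in> light_cone c"
  shows "KG c u y t = 4 * c\<^sup>2 * cone_form c y t * h2 (cone_form c y t)
    + 2 * c\<^sup>2 * (real CARD('n) + 1) * h1 (cone_form c y t)"
proof -
  let ?W = "cone_form c y t"
  have W_pos: "\<And>y t. (y, t) \<in> light_cone c \<Longrightarrow> cone_form c y t > 0"
    using cone_form_pos c by blast
  have du: "(shifted (\<lambda>y t. h (cone_form c y t)) dir y t has_real_derivative
      h1 (cone_form c y t) * (case dir of None \<Rightarrow> 2 * c\<^sup>2 * t | Some j \<Rightarrow> - 2 * y $ j)) (at 0)"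
    and dh1: "(shifted (\<lambda>y t. h1 (cone_form c y t)) dir y t has_real_derivative
      h2 (cone_form c y t) * (case dir of None \<Rightarrow> 2 * c\<^sup>2 * t | Some j \<Rightarrow> - 2 * y $ j)) (at 0)"
    if "(y, t) \<in> light_cone c" for dir y t
    using h h1 W_pos[OF that] by (auto intro!: has_real_derivative_shifted_comp_cone_form)
  have ut: "partial None u y t = 2 * c\<^sup>2 * (t * h1 (cone_form c y t))"
    and uj: "partial (Some j) u y t = -2 * (y $ j * h1 (cone_form c y t))"
    if "(y, t) \<in> light_cone c" for j y t
    using partial_eqI[OF open_light_cone that _ du[OF that]] u by (auto simp: algebra_simps)
  have utt: "partial None (partial None u) y t = 2 * c\<^sup>2 * (h1 ?W + t * (h2 ?W * (2 * c\<^sup>2 * t)))"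
    using DERIV_cmult[OF has_real_derivative_shifted_mult[OF has_real_derivative_shifted_time[of None]
        dh1[OF yt, of None]], of "2 * c\<^sup>2"]
    by (intro partial_eqI[OF open_light_cone yt, of "\<lambda>y t. 2 * c\<^sup>2 * (t * h1 (cone_form c y t))"])
      (auto simp: ut algebra_simps shifted_eq_shift_point case_prod_beta)
  have "partial (Some j) (partial (Some j) u) y t = -2 * h1 ?W + 4 * h2 ?W * (y $ j * y $ j)" for j
    using DERIV_cmult[OF has_real_derivative_shifted_mult[OF has_real_derivative_shifted_coord[of j "Some j"]
        dh1[OF yt, of "Some j"]], of "-2"]
    by (intro partial_eqI[OF open_light_cone yt, of "\<lambda>y t. -2 * (y $ j * h1 (cone_form c y t))"])
      (auto simp: uj algebra_simps shifted_eq_shift_point case_prod_beta)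
  then have ujj: "(\<Sum>j\<in>UNIV. partial (Some j) (partial (Some j) u) y t) =
      - 2 * real CARD('n) * h1 ?W + 4 * h2 ?W * (norm y)\<^sup>2"
    by (simp add: sum_subtractf norm_sq_eq_sum sum_distrib_left)
  show ?thesis
    unfolding KG_def utt ujj by (simp add: cone_form_def algebra_simps power2_eq_square)
qed

lemma KG_powr_series_cone_form:
  fixes u :: "real ^ 'n \<Rightarrow> real \<Rightarrow> real"
  assumes c: "c > 0" and dim: "real CARD('n) = 2 * n + 2" and a: "entire_coeffs a"
    and u: "\<And>y t. (y, t) \<in> light_cone c \<Longrightarrow> u y t = powr_series n a b (cone_form c y t)"
    and yt: "(y, t) \<in> light_cone c"
  shows "KG c u y t = powr_series n
    (\<lambda>k. 4 * c\<^sup>2 * deriv_coeffs n (b + n + 1/2) (deriv_coeffs n b a) k) (b - 1) (cone_form c y t)"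
proof -
  let ?W = "cone_form c y t"
  let ?a1 = "deriv_coeffs n b a" and ?a2 = "deriv_coeffs n (b - 1) (deriv_coeffs n b a)"
  have a1: "entire_coeffs ?a1" and a2: "entire_coeffs ?a2"
    using a by (auto intro: entire_deriv_coeffs)
  have "KG c u y t = 4 * c\<^sup>2 * ?W * powr_series n ?a2 (b - 2) ?W
      + 2 * c\<^sup>2 * (real CARD('n) + 1) * powr_series n ?a1 (b - 1) ?W"
    using powr_series_has_real_derivative[OF a] powr_series_has_real_derivative[OF a1, where b = "b - 1"]
    by (intro KG_comp_cone_form[where h = "powr_series n a b"] c u yt) auto
  also have "\<dots> = 4 * c\<^sup>2 * powr_series n ?a2 (b - 1) ?W
      + 2 * c\<^sup>2 * (2 * n + 3) * powr_series n ?a1 (b - 1) ?W"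
    using powr_series_times_base[OF cone_form_pos[OF yt c], of n ?a2 "b - 2"] dim
    by (simp add: mult.assoc)
  also have "\<dots> = powr_series n (\<lambda>k. 4 * c\<^sup>2 * ?a2 k + 2 * c\<^sup>2 * (2 * n + 3) * ?a1 k) (b - 1) ?W"
    by (rule powr_series_linear[OF a2 a1])
  also have "(\<lambda>k. 4 * c\<^sup>2 * ?a2 k + 2 * c\<^sup>2 * (2 * n + 3) * ?a1 k) =
      (\<lambda>k. 4 * c\<^sup>2 * deriv_coeffs n (b + n + 1/2) ?a1 k)"
    by (simp add: deriv_coeffs_def fun_eq_iff field_simps)
  finally show ?thesis .
qed


section \<open>Iterating the operator on the series of \<open>f\<close>\<close>

text \<open>The coefficients of \<open>(KG c)\<^sup>j f\<close> as a series in \<open>W\<^sup>n\<close>, \<open>n = N/2\<close>; \<open>j = 0\<close> gives those of \<open>f\<close>.\<close>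
definition kg_coeffs :: "nat \<Rightarrow> real \<Rightarrow> real \<Rightarrow> nat \<Rightarrow> nat \<Rightarrow> real" where
  "kg_coeffs N c lam j k = (4 * c\<^sup>2) ^ j * ((lam / (2 * c)) ^ N) ^ Suc k *
     rGamma (real (Suc k) * (real N / 2) - real j) *
     rGamma (real (Suc k) * (real N / 2) + real N / 2 + 1/2 - real j)"

lemma rGamma_pair_le:
  fixes N k :: nat
  assumes N: "N \<ge> 1" and k: "k \<ge> 1"
  defines "n \<equiv> real N / 2"
  shows "rGamma (real (Suc k) * n) * rGamma (real (Suc k) * n + n + 1/2) \<le> real N * 2 ^ (N * Suc k) / fact k"
proof -
  define m where "m = real (Suc k) * n"
  have n_ge: "n \<ge> 1/2" using N by (simp add: n_def)
  have "2 * (1/2) \<le> real (Suc k) * n" using n_ge k by (intro mult_mono) auto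
  then have m1: "m \<ge> 1" by (simp add: m_def)
  have two_m: "2 * m = real (N * Suc k)" by (simp add: m_def n_def algebra_simps)
  have mono: "rGamma (m + n + 1/2) \<le> rGamma (m + 1/2)"
    using Gamma_real_strict_mono[of "m + 1/2" "m + n + 1/2"] m1 n_ge
    by (simp add: rGamma_inverse_Gamma le_imp_inverse_le)
  have dup: "rGamma (m + 1/2) * rGamma (m + 1) = 2 ^ (N * Suc k) / (sqrt pi * fact (N * Suc k))"
  proof -
    have "Gamma (2 * m + 1) = fact (N * Suc k)"
      using Gamma_fact[of "N * Suc k", where 'a = real] by (simp add: two_m add.commute)
    moreover have "Gamma (m + 1/2) * Gamma (m + 1) = inverse (2 ^ (N * Suc k)) * sqrt pi * Gamma (2 * m + 1)"
      using Gamma_legendre_duplication_real[of m] m1 by (simp only: powr_neg_two_mult_nat[OF two_m])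
    ultimately show ?thesis
      by (simp only: rGamma_inverse_Gamma inverse_mult_distrib[symmetric]) (simp add: field_simps)
  qed
  have "rGamma m * rGamma (m + n + 1/2) = m * rGamma (m + 1) * rGamma (m + n + 1/2)"
    using rGamma_plus1[of m] by simp
  also have "\<dots> \<le> m * rGamma (m + 1) * rGamma (m + 1/2)"
    using mono m1 by (intro mult_left_mono) (auto simp: rGamma_inverse_Gamma)
  also have "\<dots> = m * 2 ^ (N * Suc k) / (sqrt pi * fact (N * Suc k))"
    using dup by (simp add: algebra_simps)
  also have "\<dots> \<le> m * 2 ^ (N * Suc k) / fact (Suc k)"
  proof -
    have "sqrt pi \<ge> 1" using pi_gt3 by (simp add: real_le_rsqrt)
    moreover have "fact (Suc k) \<le> (fact (N * Suc k) :: real)"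
      using mult_le_mono1[OF N, of "Suc k"] by (intro fact_mono) simp
    ultimately have "fact (Suc k) \<le> sqrt pi * (fact (N * Suc k) :: real)"
      using mult_mono[of 1 "sqrt pi" "fact (Suc k)" "fact (N * Suc k)"] by simp
    then show ?thesis using m1 by (intro divide_left_mono) auto
  qed
  also have "\<dots> = n * 2 ^ (N * Suc k) / fact k"
    by (simp add: m_def field_simps del: of_nat_Suc)
  also have "\<dots> \<le> real N * 2 ^ (N * Suc k) / fact k"
    by (intro divide_right_mono mult_right_mono) (auto simp: n_def)
  finally show ?thesis by (simp add: m_def)
qed

lemma entire_kg_coeffs_0:
  assumes N: "N \<ge> 1"
  shows "entire_coeffs (kg_coeffs N c lam 0)"
  unfolding entire_coeffs_def
proof
  fix z :: real
  define q where "q = (lam / (2 * c)) ^ N"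
  define K where "K = real N * \<bar>q\<bar> * 2 ^ N"
  define X where "X = \<bar>q\<bar> * 2 ^ N * \<bar>z\<bar>"
  show "summable (\<lambda>k. kg_coeffs N c lam 0 k * z ^ k)"
  proof (rule summable_comparison_test'[OF summable_mult[OF summable_exp[of X], of K], of 1])
    fix k :: nat assume k: "k \<ge> 1"
    have "0 < real (Suc k) * (real N / 2)" using N by simp
    then have "\<bar>rGamma (real (Suc k) * (real N / 2))\<bar> = rGamma (real (Suc k) * (real N / 2))"
      "\<bar>rGamma (real (Suc k) * (real N / 2) + real N / 2 + 1/2)\<bar> =
        rGamma (real (Suc k) * (real N / 2) + real N / 2 + 1/2)"
      by (simp_all add: rGamma_inverse_Gamma less_imp_le)
    then have "norm (kg_coeffs N c lam 0 k * z ^ k) = \<bar>q\<bar> ^ Suc k * (rGamma (real (Suc k) * (real N / 2)) *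
        rGamma (real (Suc k) * (real N / 2) + real N / 2 + 1/2)) * \<bar>z\<bar> ^ k"
      by (simp add: kg_coeffs_def q_def abs_mult power_abs)
    also have "\<dots> \<le> \<bar>q\<bar> ^ Suc k * (real N * 2 ^ (N * Suc k) / fact k) * \<bar>z\<bar> ^ k"
      using rGamma_pair_le[OF N k] by (intro mult_right_mono mult_left_mono) auto
    also have "\<dots> = K * (inverse (fact k) * X ^ k)"
      by (simp add: K_def X_def power_mult power_mult_distrib power_add field_simps)
    finally show "norm (kg_coeffs N c lam 0 k * z ^ k) \<le> K * (inverse (fact k) * X ^ k)" .
  qed
qed

lemma kg_coeffs_Suc:
  fixes N :: nat
  defines "n \<equiv> real N / 2"
  shows "kg_coeffs N c lam (Suc j) =
    (\<lambda>k. 4 * c\<^sup>2 * deriv_coeffs n (n - 1 - real j + n + 1/2)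
      (deriv_coeffs n (n - 1 - real j) (kg_coeffs N c lam j)) k)"
proof
  fix k
  define x where "x = real (Suc k) * n - real j"
  define y where "y = real (Suc k) * n + n + 1/2 - real j"
  have "real (Suc k) * (real N / 2) - real (Suc j) = x - 1"
    and "real (Suc k) * (real N / 2) + real N / 2 + 1/2 - real (Suc j) = y - 1"
    by (simp_all add: x_def y_def n_def)
  then have "kg_coeffs N c lam (Suc j) k = (4 * c\<^sup>2) ^ Suc j * ((lam / (2 * c)) ^ N) ^ Suc k *
      rGamma (x - 1) * rGamma (y - 1)"
    by (simp only: kg_coeffs_def)
  also have "\<dots> = 4 * c\<^sup>2 * ((x - 1) * (y - 1)) * kg_coeffs N c lam j k"
  proof -
    have r1: "rGamma (x - 1) = (x - 1) * rGamma x" and r2: "rGamma (y - 1) = (y - 1) * rGamma y"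
      using rGamma_plus1[of "x - 1"] rGamma_plus1[of "y - 1"] by simp_all
    show ?thesis
      unfolding r1 r2 kg_coeffs_def n_def[symmetric] x_def[symmetric] y_def[symmetric] by (simp add: algebra_simps)
  qed
  also have "(x - 1) * (y - 1) = (real k * n + (n - 1 - real j + n + 1/2)) * (real k * n + (n - 1 - real j))"
    by (simp add: x_def y_def field_simps)
  finally show "kg_coeffs N c lam (Suc j) k = 4 * c\<^sup>2 * deriv_coeffs n (n - 1 - real j + n + 1/2)
      (deriv_coeffs n (n - 1 - real j) (kg_coeffs N c lam j)) k"
    by (simp only: deriv_coeffs_def mult.assoc)
qed

lemma entire_kg_coeffs: "N \<ge> 1 \<Longrightarrow> entire_coeffs (kg_coeffs N c lam j)"
  by (induction j) (simp_all add: entire_kg_coeffs_0 kg_coeffs_Suc entire_coeffs_cmult entire_deriv_coeffs)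

lemma KG_iterate_kg_series:
  fixes u :: "real ^ 'n \<Rightarrow> real \<Rightarrow> real" and N :: nat
  defines "n \<equiv> real N / 2"
  assumes dim: "CARD('n) = N + 2" and N: "N \<ge> 1" and c: "c > 0"
    and u: "\<And>y t. (y, t) \<in> light_cone c \<Longrightarrow> u y t = powr_series n (kg_coeffs N c lam 0) (n - 1) (cone_form c y t)"
  shows "(y, t) \<in> light_cone c \<Longrightarrow>
    (KG c ^^ j) u y t = powr_series n (kg_coeffs N c lam j) (n - 1 - real j) (cone_form c y t)"
proof (induction j arbitrary: y t)
  case 0
  then show ?case using u by simp
next
  case (Suc j)
  have "real CARD('n) = 2 * n + 2" using dim by (simp add: n_def)
  from KG_powr_series_cone_form[OF c this entire_kg_coeffs[OF N] Suc.IH Suc.prems]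
  show ?case by (simp add: kg_coeffs_Suc n_def algebra_simps)
qed

lemma kg_coeffs_N_Suc_Suc:
  assumes c: "c > 0"
  shows "kg_coeffs N c lam N (Suc (Suc k)) = lam ^ (2 * N) * kg_coeffs N c lam 0 k"
proof -
  have "(4 * c\<^sup>2) ^ N * ((lam / (2 * c)) ^ N) ^ 2 = ((2 * c)\<^sup>2 * (lam / (2 * c))\<^sup>2) ^ N"
    by (simp add: power_mult_distrib power_mult[symmetric] mult.commute)
  also have "(2 * c)\<^sup>2 * (lam / (2 * c))\<^sup>2 = lam\<^sup>2" using c by (simp add: power_divide)
  finally have coeff: "(4 * c\<^sup>2) ^ N * ((lam / (2 * c)) ^ N) ^ 2 = lam ^ (2 * N)"
    by (simp add: power_mult)
  have "real (Suc (Suc (Suc k))) * (real N / 2) - real N = real (Suc k) * (real N / 2)"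
    and "real (Suc (Suc (Suc k))) * (real N / 2) + real N / 2 + 1/2 - real N =
      real (Suc k) * (real N / 2) + real N / 2 + 1/2"
    by (simp_all add: algebra_simps)
  then have "kg_coeffs N c lam N (Suc (Suc k)) =
      ((4 * c\<^sup>2) ^ N * ((lam / (2 * c)) ^ N) ^ 2) * kg_coeffs N c lam 0 k"
    unfolding kg_coeffs_def by (simp only:) (simp add: power_add power2_eq_square algebra_simps)
  then show ?thesis unfolding coeff .
qed

lemma kg_coeffs_N_1: "kg_coeffs N c lam N 1 = 0"
  by (simp add: kg_coeffs_def)

lemma kg_coeffs_N_0:
  assumes c: "c > 0"
  shows "kg_coeffs N c lam N 0 = (2 * lam * c) ^ N / (sqrt pi * Gamma (- (real N / 2)))"
proof -
  have "(4 * c\<^sup>2) ^ N * (lam / (2 * c)) ^ N = (4 * c\<^sup>2 * (lam / (2 * c))) ^ N"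
    by (rule power_mult_distrib[symmetric])
  also have "4 * c\<^sup>2 * (lam / (2 * c)) = 2 * lam * c" using c by (simp add: power2_eq_square field_simps)
  finally have coeff: "(4 * c\<^sup>2) ^ N * (lam / (2 * c)) ^ N = (2 * lam * c) ^ N" .
  have args: "real (Suc 0) * (real N / 2) - real N = - (real N / 2)"
    "real (Suc 0) * (real N / 2) + real N / 2 + 1/2 - real N = 1/2"
    by simp_all
  have "rGamma (1/2 :: real) = 1 / sqrt pi"
    by (simp only: rGamma_inverse_Gamma Gamma_one_half_real inverse_eq_divide)
  then show ?thesis
    unfolding kg_coeffs_def power_Suc0_right args coeff
    by (simp only: rGamma_inverse_Gamma divide_inverse inverse_mult_distrib mult_1_left mult_ac)
qed

lemma kg_series_after_N_steps:
  fixes N :: nat and c lam w :: real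
  assumes N: "N \<ge> 1" and c: "c > 0" and w: "w > 0"
  defines "n \<equiv> real N / 2"
  shows "powr_series n (kg_coeffs N c lam N) (n - 1 - real N) w =
     lam ^ (2 * N) * powr_series n (kg_coeffs N c lam 0) (n - 1) w
     + (2 * lam * c) ^ N * (w powr (- (real N + 2) / 2) / (sqrt pi * Gamma (1 - (real N + 2) / 2)))"
proof -
  define z where "z = w powr n"
  define f where "f = (\<lambda>k. kg_coeffs N c lam N k * z ^ k)"
  define P0 where "P0 = (\<Sum>k. kg_coeffs N c lam 0 k * z ^ k)"
  have "(\<lambda>k. f (Suc (Suc k))) sums (lam ^ (2 * N) * z\<^sup>2 * P0)"
    unfolding f_def P0_def kg_coeffs_N_Suc_Suc[OF c]
    using sums_mult[OF entire_coeffs_sums[OF entire_kg_coeffs[OF N]], of "lam ^ (2 * N) * z\<^sup>2"]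
    by (simp add: power_add power2_eq_square algebra_simps)
  then have "(\<lambda>k. f (Suc k)) sums (lam ^ (2 * N) * z\<^sup>2 * P0 + f 1)"
    by (subst (asm) sums_Suc_iff) simp
  then have "f sums (lam ^ (2 * N) * z\<^sup>2 * P0 + f 1 + f 0)"
    by (subst (asm) sums_Suc_iff) simp
  then have sf: "suminf f = lam ^ (2 * N) * z\<^sup>2 * P0 + (2 * lam * c) ^ N / (sqrt pi * Gamma (- n))"
    by (simp add: sums_iff f_def kg_coeffs_N_1[unfolded One_nat_def] kg_coeffs_N_0[OF c] n_def)
  have "z\<^sup>2 = w powr (2 * n)"
    unfolding z_def using w by (simp add: powr_mult_base power2_eq_square powr_add[symmetric])
  then have wz: "w powr (n - 1 - real N) * z\<^sup>2 = w powr (n - 1)"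
    by (simp add: n_def flip: powr_add)
  have exps: "- (real N + 2) / 2 = n - 1 - real N" "1 - (real N + 2) / 2 = - n"
    by (simp_all add: n_def field_simps)
  have "powr_series n (kg_coeffs N c lam N) (n - 1 - real N) w = w powr (n - 1 - real N) * suminf f"
    by (simp add: powr_series_def f_def z_def)
  also have "\<dots> = lam ^ (2 * N) * (w powr (n - 1 - real N) * z\<^sup>2) * P0 +
      (2 * lam * c) ^ N * (w powr (n - 1 - real N) / (sqrt pi * Gamma (- n)))"
    unfolding sf by (simp add: algebra_simps)
  finally show ?thesis
    unfolding wz exps by (simp add: powr_series_def P0_def z_def)
qed


section \<open>The density as a generalised power series\<close>

lemma Gamma_nat_mult_add: "Gamma (real N * real k + (real N + 1)) = fact (N * Suc k)"
  using Gamma_fact[of "N * Suc k", where 'a = real] by (simp add: algebra_simps)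

lemma summable_ML2_terms:
  fixes X :: real
  assumes N: "N \<ge> 1"
  shows "summable (\<lambda>k. X ^ k / Gamma (real N * real k + (real N + 1)))"
proof (rule summable_comparison_test'[OF summable_exp[of "\<bar>X\<bar>"], of 0])
  fix k :: nat
  have "fact k \<le> (fact (N * Suc k) :: real)"
    using mult_le_mono1[OF N, of "Suc k"] by (intro fact_mono) simp
  then have "\<bar>X\<bar> ^ k / fact (N * Suc k) \<le> \<bar>X\<bar> ^ k / fact k"
    by (intro divide_left_mono) auto
  then show "norm (X ^ k / Gamma (real N * real k + (real N + 1))) \<le> inverse (fact k) * \<bar>X\<bar> ^ k"
    by (simp add: Gamma_nat_mult_add abs_mult power_abs divide_inverse mult.commute)
qed

lemma ML2_pos: "N \<ge> 1 \<Longrightarrow> X > 0 \<Longrightarrow> ML2 (real N) (real N + 1) X > 0"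
  unfolding ML2_def by (rule suminf_pos[OF summable_ML2_terms]) (simp_all add: Gamma_nat_mult_add)

lemma ML4_eq_ML2:
  fixes N :: nat and x :: real
  defines "n \<equiv> real N / 2"
  assumes N: "N \<ge> 1" and x: "x > 0"
  shows "ML4 n (n + 1) n (n + 1/2) ((x / 2) ^ N) = 2 ^ N / sqrt pi * ML2 (real N) (real N + 1) (x ^ N)"
proof -
  have summand: "((x / 2) ^ N) ^ k / (Gamma (n * real k + (n + 1)) * Gamma (n * real k + (n + 1/2))) =
      2 ^ N / sqrt pi * ((x ^ N) ^ k / Gamma (real N * real k + (real N + 1)))" for k
  proof -
    define m where "m = real (Suc k) * n"
    have two_m: "2 * m = real (N * Suc k)" by (simp add: m_def n_def algebra_simps)
    have m0: "m \<ge> 0" by (simp add: m_def n_def)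
    define G where "G = Gamma (2 * m + 1)"
    have G: "G > 0" unfolding G_def
      using two_m of_nat_0_le_iff[of "N * Suc k"] by (intro Gamma_real_pos) linarith
    have "Gamma (m + 1/2) * Gamma (m + 1) = inverse (2 ^ (N * Suc k)) * sqrt pi * G"
      using Gamma_legendre_duplication_real[of m] m0
      by (simp only: powr_neg_two_mult_nat[OF two_m] G_def)
    moreover have "(2::real) ^ (N * Suc k) = 2 ^ N * 2 ^ (N * k)" by (simp add: power_add)
    ultimately have dup: "Gamma (m + 1) * Gamma (m + 1/2) = sqrt pi * G / (2 ^ N * 2 ^ (N * k))"
      by (simp add: field_simps)
    have args: "n * real k + (n + 1) = m + 1" "n * real k + (n + 1/2) = m + 1/2"
      "real N * real k + (real N + 1) = 2 * m + 1"
      by (simp_all add: m_def n_def algebra_simps)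
    have "((x / 2) ^ N) ^ k = (x ^ N) ^ k / 2 ^ (N * k)"
      by (simp add: power_divide power_mult)
    then show ?thesis
      unfolding args dup G_def[symmetric] using G by (simp add: field_simps power_mult)
  qed
  have "ML4 n (n + 1) n (n + 1/2) ((x / 2) ^ N) =
      (\<Sum>k. 2 ^ N / sqrt pi * ((x ^ N) ^ k / Gamma (real N * real k + (real N + 1))))"
    unfolding ML4_def by (simp only: summand)
  also have "\<dots> = 2 ^ N / sqrt pi * ML2 (real N) (real N + 1) (x ^ N)"
    unfolding ML2_def by (rule suminf_mult[OF summable_ML2_terms[OF N]])
  finally show ?thesis .
qed

lemma pcond_mult_PN:
  fixes N K :: nat and c t lam r :: real
  defines "n \<equiv> real N / 2"
  assumes N: "N \<ge> 1" and K: "K \<ge> 1" and c: "c > 0" and t: "t > 0" and lam: "lam > 0"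
    and r: "0 \<le> r" "r < c * t"
  shows "pcond (N + 2) c r t K * PN (N + 2) lam t K =
    sqrt pi / (pi powr (n + 1) * (2 * c * t) ^ N * ML2 (real N) (real N + 1) ((lam * t) ^ N)) *
    ((lam / (2 * c)) ^ (K * N) * (c\<^sup>2 * t\<^sup>2 - r\<^sup>2) powr (real K * n - 1) /
     (Gamma (real K * n) * Gamma (real K * n + n + 1/2)))"
proof -
  define M where "M = (real K + 1) * n"
  define W where "W = c\<^sup>2 * t\<^sup>2 - r\<^sup>2"
  define M2 where "M2 = ML2 (real N) (real N + 1) ((lam * t) ^ N)"
  have M2: "M2 > 0" unfolding M2_def using N lam t by (intro ML2_pos) auto
  have M0: "M \<ge> 0" by (simp add: M_def n_def)
  have Gammas: "Gamma (real K * n) > 0" "Gamma (2 * M + 1) > 0" "Gamma (M + 1/2) > 0"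
    using N K M0 by (simp_all add: n_def)
  have two_M: "2 * M = real (N * K + N)" by (simp add: M_def n_def algebra_simps)
  have pc: "pcond (N + 2) c r t K =
      Gamma (M + 1) / Gamma (real K * n) * (W powr (real K * n - 1) / (pi powr (n + 1) * (c * t) ^ (N * K + N)))"
  proof -
    have "(c * t) powr (2 * (real K + 1) * n) = (c * t) powr real (N * K + N)"
      using two_M by (simp add: M_def algebra_simps)
    also have "\<dots> = (c * t) ^ (N * K + N)" by (rule powr_realpow) (use c t in simp)
    finally have ct: "(c * t) powr (2 * (real K + 1) * n) = (c * t) ^ (N * K + N)" .
    have "real (N + 2) / 2 - 1 = n" "real (N + 2) / 2 = n + 1" by (simp_all add: n_def field_simps)
    then show ?thesis
      using r unfolding pcond_def by (simp only: ct M_def[symmetric] W_def[symmetric]) simp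
  qed
  have pn: "PN (N + 2) lam t K = (lam * t) ^ (K * N) / (M2 * Gamma (2 * M + 1))"
  proof -
    have "(real (N + 2) - 2) * real K + real (N + 2) - 1 = 2 * M + 1"
      by (simp add: M_def n_def algebra_simps)
    then show ?thesis unfolding PN_def by (simp add: M2_def ac_simps)
  qed
  have "pcond (N + 2) c r t K * PN (N + 2) lam t K =
      Gamma (M + 1) / Gamma (2 * M + 1) * ((lam * t) ^ (K * N) / (c * t) ^ (N * K + N)) *
      (W powr (real K * n - 1) / (Gamma (real K * n) * pi powr (n + 1) * M2))"
    unfolding pc pn using Gammas M2 c t by (simp add: field_simps)
  also have "Gamma (M + 1) / Gamma (2 * M + 1) = sqrt pi / 2 ^ (N * K + N) / Gamma (real K * n + n + 1/2)"
  proof -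
    have "Gamma (M + 1/2) * Gamma (M + 1) = inverse (2 ^ (N * K + N)) * sqrt pi * Gamma (2 * M + 1)"
      using Gamma_legendre_duplication_real[OF M0] by (simp only: powr_neg_two_mult_nat[OF two_M])
    moreover have "real K * n + n + 1/2 = M + 1/2" by (simp add: M_def algebra_simps)
    ultimately show ?thesis using Gammas by (simp only:) (simp add: field_simps)
  qed
  also have "sqrt pi / 2 ^ (N * K + N) / Gamma (real K * n + n + 1/2) * ((lam * t) ^ (K * N) / (c * t) ^ (N * K + N))
      = sqrt pi / Gamma (real K * n + n + 1/2) * ((lam / (2 * c)) ^ (K * N) / (2 * c * t) ^ N)"
    using c t by (simp add: power_add power_mult_distrib power_divide field_simps)
  finally show ?thesis
    using Gammas M2 c t unfolding W_def[symmetric] M2_def[symmetric] by (simp add: field_simps)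
qed


lemma kg_coeffs_0_term:
  fixes N k :: nat and W c lam :: real
  defines "n \<equiv> real N / 2"
  assumes N: "N \<ge> 1" and W: "W > 0"
  shows "(lam / (2 * c)) ^ (Suc k * N) * W powr (real (Suc k) * n - 1) /
      (Gamma (real (Suc k) * n) * Gamma (real (Suc k) * n + n + 1/2)) =
    kg_coeffs N c lam 0 k * (W powr n) ^ k * W powr (n - 1)"
proof -
  have "W powr (real (Suc k) * n - 1) = (W powr n) ^ k * W powr (n - 1)"
    using W by (simp add: powr_power flip: powr_add) (simp add: algebra_simps)
  moreover have "(lam / (2 * c)) ^ (Suc k * N) = ((lam / (2 * c)) ^ N) ^ Suc k"
    by (simp add: power_mult[symmetric] power_add mult.commute)
  moreover have "real (Suc k) * n > 0" "n \<ge> 0" using N by (simp_all add: n_def)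
  then have "Gamma (real (Suc k) * n) > 0" "Gamma (real (Suc k) * n + n + 1/2) > 0"
    by (intro Gamma_real_pos; linarith)+
  ultimately show ?thesis
    unfolding kg_coeffs_def n_def[symmetric] rGamma_inverse_Gamma by (simp add: field_simps)
qed

lemma flight_term_eq:
  fixes d N k :: nat and W c lam :: real
  defines "n \<equiv> real N / 2"
  assumes d: "d = N + 2" and W: "W > 0"
  shows "(lam / (2 * c)) ^ (Suc k * (d - 2)) * sqrt W powr (real (Suc k * (d - 2)) - 2) /
      (Gamma (real (Suc k) * (real d / 2 - 1)) * Gamma ((real d - 1) / 2 + (real d / 2 - 1) * real (Suc k))) =
    (lam / (2 * c)) ^ (Suc k * N) * W powr (real (Suc k) * n - 1) /
      (Gamma (real (Suc k) * n) * Gamma (real (Suc k) * n + n + 1/2))"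
proof -
  have "sqrt W powr (real (Suc k * N) - 2) = W powr (real (Suc k) * n - 1)"
    using W by (simp add: powr_half_sqrt[symmetric] powr_powr n_def field_simps)
  moreover have "real d / 2 - 1 = n" "(real d - 1) / 2 + n * real (Suc k) = real (Suc k) * n + n + 1/2"
    by (simp_all add: d n_def field_simps)
  ultimately show ?thesis using d by (simp only:) simp
qed

lemma fY_eq_scaled_pY:
  fixes y :: "real ^ 'n" and c lam t :: real
  defines "N \<equiv> CARD('n) - 2"
  defines "n \<equiv> real N / 2"
  assumes dim: "CARD('n) \<ge> 3" and c: "c > 0" and lam: "lam > 0" and t: "t > 0"
  shows "fY c lam y t =
    pi powr (n + 1) * (c * t) ^ N * (2 ^ N / sqrt pi * ML2 (real N) (real N + 1) ((lam * t) ^ N)) * pY c lam y t"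
proof -
  have N: "N \<ge> 1" using dim by (simp add: N_def)
  have "real CARD('n) / 2 = n + 1" "n + 1 - 1 = n" "(real CARD('n) - 1) / 2 = n + 1/2"
    "real CARD('n) - 2 = real N"
    using dim by (simp_all add: N_def n_def field_simps)
  moreover have "(lam * t / 2) powr real N = (lam * t / 2) ^ N" "(c * t) powr real N = (c * t) ^ N"
    using c t lam by (simp_all add: powr_realpow)
  ultimately show ?thesis
    unfolding fY_def Let_def by (simp only: ML4_eq_ML2[OF N, of "lam * t", folded n_def] lam t mult_pos_pos)
qed

lemma fY_kg_series:
  fixes y :: "real ^ 'n" and c lam t :: real
  defines "N \<equiv> CARD('n) - 2"
  defines "n \<equiv> real N / 2"
  assumes dim: "CARD('n) \<ge> 3" and c: "c > 0" and lam: "lam > 0" and yt: "(y, t) \<in> light_cone c"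
  shows "(\<lambda>k. (lam / (2 * c)) ^ (Suc k * (CARD('n) - 2)) *
              sqrt (c\<^sup>2 * t\<^sup>2 - (norm y)\<^sup>2) powr (real (Suc k * (CARD('n) - 2)) - 2) /
              (Gamma (real (Suc k) * (real CARD('n) / 2 - 1)) *
               Gamma ((real CARD('n) - 1) / 2 + (real CARD('n) / 2 - 1) * real (Suc k))))
        sums fY c lam y t"
    (is "?T sums _")
    and "fY c lam y t = powr_series n (kg_coeffs N c lam 0) (n - 1) (cone_form c y t)"
proof -
  define T where "T = ?T"
  define W where "W = cone_form c y t"
  define C where "C = pi powr (n + 1) * (c * t) ^ N * (2 ^ N / sqrt pi * ML2 (real N) (real N + 1) ((lam * t) ^ N))"
  have t: "t > 0" and r: "norm y < c * t" using yt by (auto simp: light_cone_def)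
  have N: "N \<ge> 1" and d: "CARD('n) = N + 2" using dim by (simp_all add: N_def)
  have W: "W > 0" unfolding W_def by (rule cone_form_pos[OF yt c])
  have C: "C > 0" unfolding C_def using N lam t c by (simp add: ML2_pos)
  have T_eq: "T k = (lam / (2 * c)) ^ (Suc k * N) * W powr (real (Suc k) * n - 1) /
      (Gamma (real (Suc k) * n) * Gamma (real (Suc k) * n + n + 1/2))" for k
    using flight_term_eq[OF d W, of lam c k, folded n_def] by (simp add: T_def W_def cone_form_def)
  have "T = (\<lambda>k. W powr (n - 1) * (kg_coeffs N c lam 0 k * (W powr n) ^ k))"
    using T_eq kg_coeffs_0_term[OF N W, folded n_def] by (auto simp: mult_ac)
  then have sums_T: "T sums powr_series n (kg_coeffs N c lam 0) (n - 1) W"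
    unfolding powr_series_def by (simp add: sums_mult[OF entire_coeffs_sums[OF entire_kg_coeffs[OF N]]])
  have "pcond (N + 2) c (norm y) t (Suc k) * PN (N + 2) lam t (Suc k) = T k / C" for k
    using pcond_mult_PN[OF N _ c t lam norm_ge_zero r, of "Suc k"] c t C
    by (simp add: T_eq n_def C_def W_def cone_form_def power_mult_distrib field_simps)
  then have "pY c lam y t = (\<Sum>k. T k / C)"
    by (simp add: pY_def d)
  also have "\<dots> = suminf T / C"
    using sums_T by (intro suminf_divide) (simp add: sums_iff)
  finally have "pY c lam y t = suminf T / C" .
  moreover have "fY c lam y t = C * pY c lam y t"
    unfolding C_def N_def n_def by (rule fY_eq_scaled_pY[OF dim c lam t])
  ultimately have "fY c lam y t = suminf T" using C by simp
  then show "?T sums fY c lam y t" and "fY c lam y t = powr_series n (kg_coeffs N c lam 0) (n - 1) (cone_form c y t)"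
    using sums_T by (simp_all add: sums_iff T_def W_def)
qed

lemma all_partials_exist_fY:
  assumes dim: "CARD('n) \<ge> 3" and c: "c > 0" and lam: "lam > 0"
  shows "all_partials_exist (light_cone c) (fY c lam :: real ^ 'n \<Rightarrow> real \<Rightarrow> real)"
proof (rule all_partials_exist_if_has_partials[OF open_light_cone])
  define N where "N = CARD('n) - 2"
  define n where "n = real N / 2"
  have N: "N \<ge> 1" using dim by (simp add: N_def)
  fix m
  have "has_partials m (light_cone c) (\<lambda>y t. powr_series n (kg_coeffs N c lam 0) (n - 1) (cone_form c y t))"
    using cone_form_pos[OF _ c]
    by (intro has_partials_comp[OF has_derivs_powr_series[OF entire_kg_coeffs[OF N]] has_partials_cone_form])
      auto
  then show "has_partials m (light_cone c) (fY c lam :: real ^ 'n \<Rightarrow> real \<Rightarrow> real)"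
    by (rule has_partials_cong[OF open_light_cone, rotated])
      (use fY_kg_series(2)[OF dim c lam] in \<open>simp add: N_def n_def\<close>)
qed

lemma KG_power_fY:
  fixes y :: "real ^ 'n"
  assumes dim: "CARD('n) \<ge> 3" and c: "c > 0" and lam: "lam > 0" and yt: "(y, t) \<in> light_cone c"
  shows "(KG c ^^ (CARD('n) - 2)) (fY c lam) y t =
    lam ^ (2 * (CARD('n) - 2)) * fY c lam y t + (2 * lam * c) ^ (CARD('n) - 2) *
      (cone_form c y t powr (- real CARD('n) / 2) / (sqrt pi * Gamma (1 - real CARD('n) / 2)))"
proof -
  define N where "N = CARD('n) - 2"
  define n where "n = real N / 2"
  have N: "N \<ge> 1" and d: "CARD('n) = N + 2" and dr: "real CARD('n) = real N + 2"
    using dim by (simp_all add: N_def)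
  have f_eq: "fY c lam y t = powr_series n (kg_coeffs N c lam 0) (n - 1) (cone_form c y t)"
    if "(y, t) \<in> light_cone c" for y :: "real ^ 'n" and t
    using fY_kg_series(2)[OF dim c lam that] by (simp add: N_def n_def)
  have "(KG c ^^ N) (fY c lam) y t = powr_series n (kg_coeffs N c lam N) (n - 1 - real N) (cone_form c y t)"
    using KG_iterate_kg_series[OF d N c, of "fY c lam" lam, folded n_def] f_eq yt by blast
  also have "\<dots> = lam ^ (2 * N) * fY c lam y t + (2 * lam * c) ^ N *
      (cone_form c y t powr (- (real N + 2) / 2) / (sqrt pi * Gamma (1 - (real N + 2) / 2)))"
    using kg_series_after_N_steps[OF N c cone_form_pos[OF yt c], of lam, folded n_def]
    by (simp add: f_eq[OF yt])
  finally show ?thesis by (simp only: N_def[symmetric] dr)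
qed

theorem theorem3p3:
  fixes c lam :: real
  assumes dim: "CARD('n) \<ge> 3"
    and c_pos: "c > 0" and lam_pos: "lam > 0"
  shows
    "(\<forall>(y :: real ^ 'n) t. t > 0 \<and> norm y < c * t \<longrightarrow>
        (\<lambda>k. (lam / (2 * c)) ^ (Suc k * (CARD('n) - 2)) *
              sqrt (c\<^sup>2 * t\<^sup>2 - (norm y)\<^sup>2) powr (real (Suc k * (CARD('n) - 2)) - 2) /
              (Gamma (real (Suc k) * (real CARD('n) / 2 - 1)) *
               Gamma ((real CARD('n) - 1) / 2 + (real CARD('n) / 2 - 1) * real (Suc k))))
        sums fY c lam y t)
   \<and> all_partials_exist {(y :: real ^ 'n, t). t > 0 \<and> norm y < c * t} (fY c lam)
   \<and> (\<forall>(y :: real ^ 'n) t. t > 0 \<and> norm y < c * t \<longrightarrow>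
        (KG c ^^ (CARD('n) - 2)) (fY c lam) y t =
          lam ^ (2 * (CARD('n) - 2)) * fY c lam y t
          + (2 * lam * c) ^ (CARD('n) - 2) *
            ((c\<^sup>2 * t\<^sup>2 - (norm y)\<^sup>2) powr (- real CARD('n) / 2) /
             (sqrt pi * Gamma (1 - real CARD('n) / 2))))"
  using fY_kg_series(1)[OF dim c_pos lam_pos] all_partials_exist_fY[OF dim c_pos lam_pos]
    KG_power_fY[OF dim c_pos lam_pos]
  unfolding light_cone_def cone_form_def mem_Collect_eq case_prod_conv by blast

end
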